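(* Let $c=\prod_\nu p_\nu^{e_\nu}$ with distinct irregular primes $p_\nu$ and exponents $e_\nu\ge1$. Then \[ \Lambda(c)\ \ge\ \max_\nu \Lambda(p_\nu^{e_\nu}). \]
   Context: $B_n$ denotes the $n$-th Bernoulli number ($\frac{z}{e^z-1}=\sum_{n\ge0}B_n\frac{z^n}{n!}$), $\operatorname{num}(r)$ the numerator of a rational number in lowest terms. An odd prime $p$ is irregular if $p\mid B_l$ for some even $l$ with $2\le l\le p-3$. For a positive integer $c$, $\Lambda(c)$ is the least even integer $m\ge2$ such that $\operatorname{num}(B_m/m)\big/\operatorname{num}(B_m/(m(m-1)))\equiv0\pmod c$, with $\Lambda(c)=\infty$ if no such $m$ exists. *)

theory Defs
  imports Complex_Main "HOL-Computational_Algebra.Primes" "HOL-Library.Extended_Nat"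
begin

text \<open>Bernoulli numbers with the convention z/(e^z-1) = sum B_n z^n/n!, i.e. B_1 = -1/2,
  given by the standard recurrence sum_{k=0}^{n} C(n+1,k) B_k = 0 for n >= 1.\<close>
fun bernoulli :: "nat \<Rightarrow> rat" where
  "bernoulli n = (if n = 0 then 1
     else - (\<Sum>k<n. of_nat ((n + 1) choose k) * bernoulli k) / of_nat (n + 1))"

definition num :: "rat \<Rightarrow> int" where
  "num r = fst (quotient_of r)"

definition irregular_prime :: "nat \<Rightarrow> bool" where
  "irregular_prime p \<longleftrightarrow> prime p \<and> odd p \<and>
     (\<exists>l. even l \<and> 2 \<le> l \<and> l \<le> p - 3 \<and> int p dvd num (bernoulli l))"

text \<open>The defining condition of Lambda: num(B_m/m) / num(B_m/(m(m-1))) is congruent to 0 mod c,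
  i.e. this rational number lies in c*Z.\<close>
definition lambda_cond :: "nat \<Rightarrow> nat \<Rightarrow> bool" where
  "lambda_cond c m \<longleftrightarrow>
     (\<exists>k::int. of_int (num (bernoulli m / of_nat m))
                / of_int (num (bernoulli m / (of_nat m * (of_nat m - 1))))
              = (of_int (int c * k) :: rat))"

definition Lambda :: "nat \<Rightarrow> enat" where
  "Lambda c = (if \<exists>m. even m \<and> 2 \<le> m \<and> lambda_cond c m
     then enat (LEAST m. even m \<and> 2 \<le> m \<and> lambda_cond c m) else \<infinity>)"

end

theory Submission
  imports Defs
begin

lemma lambda_cond_dvd:
  assumes "d dvd c" and "lambda_cond c m"
  shows "lambda_cond d m"
proof -
  obtain j where "c = d * j"
    using assms(1) by blast
  then have "int c * k = int d * (int j * k)" for k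
    by simp
  with assms(2) show ?thesis
    unfolding lambda_cond_def by metis
qed

lemma Lambda_dvd_mono:
  assumes "d dvd c"
  shows "Lambda d \<le> Lambda c"
proof (cases "\<exists>m. even m \<and> 2 \<le> m \<and> lambda_cond c m")
  case False
  then show ?thesis
    unfolding Lambda_def by auto
next
  case True
  define m where "m = (LEAST m. even m \<and> 2 \<le> m \<and> lambda_cond c m)"
  have "even m \<and> 2 \<le> m \<and> lambda_cond c m"
    unfolding m_def using True by (rule LeastI_ex)
  then have m_d: "even m \<and> 2 \<le> m \<and> lambda_cond d m"
    using lambda_cond_dvd assms by blast
  then have "(LEAST m. even m \<and> 2 \<le> m \<and> lambda_cond d m) \<le> m"
    by (rule Least_le)
  with m_d True show ?thesis
    unfolding Lambda_def m_def by auto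
qed

theorem lemma4p1:
  fixes P :: "nat set" and e :: "nat \<Rightarrow> nat"
  assumes "finite P" and "P \<noteq> {}"
    and "\<forall>p\<in>P. irregular_prime p"
    and "\<forall>p\<in>P. 1 \<le> e p"
  shows "Lambda (\<Prod>p\<in>P. p ^ e p) \<ge> Max ((\<lambda>p. Lambda (p ^ e p)) ` P)"
proof -
  have "Lambda (p ^ e p) \<le> Lambda (\<Prod>p\<in>P. p ^ e p)" if "p \<in> P" for p
    using dvd_prodI[OF assms(1) that] by (rule Lambda_dvd_mono)
  then show ?thesis
    using assms(1,2) by (simp add: Max_le_iff)
qed

end
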